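(* Let $G$ be a graph. (i) Every self-locating-dominating code in $G$ is a $2$-dominating set of $G$. (ii) If the girth of $G$ is at least $5$, then every $2$-dominating set of $G$ is a self-locating-dominating code of $G$.
   Context: All graphs are finite, simple and undirected (not necessarily connected). For $u\in V$, $N(u)$ is the set of neighbours of $u$ and $N[u]=N(u)\cup\{u\}$. A code is a non-empty subset $C\subseteq V$; $I(C;u)=N[u]\cap C$. A code $C$ is self-locating-dominating if for every $u\in V\setminus C$ we have $I(C;u)\neq\emptyset$ and $\bigcap_{c\in I(C;u)}N[c]=\{u\}$. A set $S\subseteq V$ is $2$-dominating if $|N[u]\cap S|\ge 2$ for every $u\in V\setminus S$. The girth is the length of a shortest cycle; acyclic graphs have infinite girth. *)

theory Defs
  imports Main "HOL-Library.Extended_Nat"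
begin

definition graph :: "'a set \<Rightarrow> ('a \<Rightarrow> 'a \<Rightarrow> bool) \<Rightarrow> bool" where
  "graph V E \<longleftrightarrow> finite V \<and> V \<noteq> {} \<and> (\<forall>u v. E u v \<longrightarrow> u \<in> V \<and> v \<in> V)
     \<and> (\<forall>u v. E u v \<longrightarrow> E v u) \<and> (\<forall>u. \<not> E u u)"

definition nbhd :: "'a set \<Rightarrow> ('a \<Rightarrow> 'a \<Rightarrow> bool) \<Rightarrow> 'a \<Rightarrow> 'a set" where
  "nbhd V E u = {v \<in> V. E u v}"

definition cnbhd :: "'a set \<Rightarrow> ('a \<Rightarrow> 'a \<Rightarrow> bool) \<Rightarrow> 'a \<Rightarrow> 'a set" where
  "cnbhd V E u = insert u (nbhd V E u)"

definition Iset :: "'a set \<Rightarrow> ('a \<Rightarrow> 'a \<Rightarrow> bool) \<Rightarrow> 'a set \<Rightarrow> 'a \<Rightarrow> 'a set" where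
  "Iset V E C u = cnbhd V E u \<inter> C"

definition self_locating_dominating :: "'a set \<Rightarrow> ('a \<Rightarrow> 'a \<Rightarrow> bool) \<Rightarrow> 'a set \<Rightarrow> bool" where
  "self_locating_dominating V E C \<longleftrightarrow> C \<subseteq> V \<and> C \<noteq> {} \<and>
     (\<forall>u \<in> V - C. Iset V E C u \<noteq> {} \<and>
        (\<Inter>c \<in> Iset V E C u. cnbhd V E c) = {u})"

definition two_dominating :: "'a set \<Rightarrow> ('a \<Rightarrow> 'a \<Rightarrow> bool) \<Rightarrow> 'a set \<Rightarrow> bool" where
  "two_dominating V E S \<longleftrightarrow> S \<subseteq> V \<and> (\<forall>u \<in> V - S. card (cnbhd V E u \<inter> S) \<ge> 2)"

definition is_cycle :: "'a set \<Rightarrow> ('a \<Rightarrow> 'a \<Rightarrow> bool) \<Rightarrow> 'a list \<Rightarrow> bool" where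
  "is_cycle V E xs \<longleftrightarrow> length xs \<ge> 3 \<and> distinct xs \<and> set xs \<subseteq> V \<and>
     (\<forall>i < length xs - 1. E (xs ! i) (xs ! Suc i)) \<and> E (last xs) (hd xs)"

text \<open>Girth: length of a shortest cycle; \<infinity> for acyclic graphs.\<close>
definition girth :: "'a set \<Rightarrow> ('a \<Rightarrow> 'a \<Rightarrow> bool) \<Rightarrow> enat" where
  "girth V E = (INF xs \<in> {xs. is_cycle V E xs}. enat (length xs))"

end

theory Submission
  imports Defs
begin

text \<open>(i) If an uncovered vertex u saw a single codeword c, then N[c] = {u}, which is
  impossible since c \<in> N[c] and c \<noteq> u. (ii) Two distinct codewords c1, c2 adjacent to u
  have no common closed neighbour w \<noteq> u: w \<in> {c1, c2} gives a triangle u c1 c2 and any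
  other w a 4-cycle u c1 w c2, both excluded by girth at least 5.\<close>

lemma finite_cnbhd: "finite V \<Longrightarrow> finite (cnbhd V E u)"
  unfolding cnbhd_def nbhd_def by simp

lemma girth_le_cycle_length: "is_cycle V E xs \<Longrightarrow> girth V E \<le> enat (length xs)"
  unfolding girth_def by (rule INF_lower) simp

lemma cycle_length_ge_girth:
  assumes "girth V E \<ge> enat k" and "is_cycle V E xs"
  shows "k \<le> length xs"
  using order_trans[OF assms(1) girth_le_cycle_length[OF assms(2)]] by simp

lemma is_cycle_3:
  assumes "graph V E" "distinct [a, b, c]" "E a b" "E b c" "E c a"
  shows "is_cycle V E [a, b, c]"
proof -
  have "{a, b, c} \<subseteq> V" using assms unfolding graph_def by blast
  then show ?thesis
    using assms(2-) unfolding is_cycle_def by (auto simp: less_Suc_eq nth_Cons split: nat.splits)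
qed

lemma is_cycle_4:
  assumes "graph V E" "distinct [a, b, c, d]" "E a b" "E b c" "E c d" "E d a"
  shows "is_cycle V E [a, b, c, d]"
proof -
  have "{a, b, c, d} \<subseteq> V" using assms unfolding graph_def by blast
  then show ?thesis
    using assms(2-) unfolding is_cycle_def by (auto simp: less_Suc_eq nth_Cons split: nat.splits)
qed

lemma cnbhd_inter_eq_if_girth_ge_5:
  assumes G: "graph V E" and girth: "girth V E \<ge> 5"
    and "E u c\<^sub>1" "E u c\<^sub>2" "c\<^sub>1 \<noteq> c\<^sub>2"
  shows "cnbhd V E c\<^sub>1 \<inter> cnbhd V E c\<^sub>2 = {u}"
proof
  have sym: "\<And>x y. E x y \<Longrightarrow> E y x" and irrefl: "\<And>x. \<not> E x x"
    using G unfolding graph_def by auto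
  have short: False if "is_cycle V E xs" "length xs < 5" for xs
    using cycle_length_ge_girth[of 5 V E xs] girth that by (simp add: numeral_eq_enat)
  show "cnbhd V E c\<^sub>1 \<inter> cnbhd V E c\<^sub>2 \<subseteq> {u}"
  proof
    fix w assume w: "w \<in> cnbhd V E c\<^sub>1 \<inter> cnbhd V E c\<^sub>2"
    show "w \<in> {u}"
    proof (rule ccontr)
      assume "w \<notin> {u}"
      have "w = c\<^sub>1 \<or> E c\<^sub>1 w" "w = c\<^sub>2 \<or> E c\<^sub>2 w"
        using w unfolding cnbhd_def nbhd_def by auto
      then consider "w = c\<^sub>1 \<or> w = c\<^sub>2" | "E c\<^sub>1 w" "E w c\<^sub>2" "w \<noteq> c\<^sub>1" "w \<noteq> c\<^sub>2"
        using sym irrefl by blast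
      then show False
      proof cases
        case 1
        then have "E c\<^sub>1 c\<^sub>2 \<or> E c\<^sub>2 c\<^sub>1"
          using w \<open>c\<^sub>1 \<noteq> c\<^sub>2\<close> unfolding cnbhd_def nbhd_def by auto
        then have "E c\<^sub>1 c\<^sub>2" using sym by blast
        moreover have "distinct [u, c\<^sub>1, c\<^sub>2]"
          using assms(3-5) irrefl by auto
        ultimately have "is_cycle V E [u, c\<^sub>1, c\<^sub>2]"
          using is_cycle_3[OF G _ assms(3) _ sym[OF assms(4)]] by blast
        then show False by (rule short) simp
      next
        case 2
        moreover have "distinct [u, c\<^sub>1, w, c\<^sub>2]"
          using 2 assms(3-5) irrefl \<open>w \<notin> {u}\<close> by auto
        ultimately have "is_cycle V E [u, c\<^sub>1, w, c\<^sub>2]"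
          using is_cycle_4[OF G _ assms(3) _ _ sym[OF assms(4)]] 2 by blast
        then show False by (rule short) simp
      qed
    qed
  qed
  show "{u} \<subseteq> cnbhd V E c\<^sub>1 \<inter> cnbhd V E c\<^sub>2"
    using assms(3,4) sym G unfolding graph_def cnbhd_def nbhd_def by blast
qed

lemma self_locating_dominating_imp_two_dominating:
  assumes "finite V" and C: "self_locating_dominating V E C"
  shows "two_dominating V E C"
  unfolding two_dominating_def
proof (intro conjI ballI)
  show "C \<subseteq> V" using C unfolding self_locating_dominating_def by blast
  fix u assume u: "u \<in> V - C"
  have ne: "cnbhd V E u \<inter> C \<noteq> {}" and loc: "(\<Inter>c \<in> cnbhd V E u \<inter> C. cnbhd V E c) = {u}"
    using C u unfolding self_locating_dominating_def Iset_def by auto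
  show "2 \<le> card (cnbhd V E u \<inter> C)"
  proof (rule ccontr)
    assume "\<not> 2 \<le> card (cnbhd V E u \<inter> C)"
    moreover have "card (cnbhd V E u \<inter> C) \<noteq> 0"
      using ne finite_cnbhd[OF \<open>finite V\<close>] by simp
    ultimately have "card (cnbhd V E u \<inter> C) = 1" by linarith
    then obtain c where c: "cnbhd V E u \<inter> C = {c}" by (auto simp: card_Suc_eq)
    then have "cnbhd V E c = {u}" using loc by simp
    moreover have "c \<in> cnbhd V E c" unfolding cnbhd_def by simp
    moreover have "c \<in> C" using c by blast
    ultimately show False using u by auto
  qed
qed

lemma two_dominating_imp_self_locating_dominating:
  assumes G: "graph V E" and girth: "girth V E \<ge> 5" and S: "two_dominating V E S"
  shows "self_locating_dominating V E S"
  unfolding self_locating_dominating_def Iset_def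
proof (intro conjI ballI)
  have two: "\<And>u. u \<in> V - S \<Longrightarrow> 2 \<le> card (cnbhd V E u \<inter> S)"
    using S unfolding two_dominating_def by blast
  show "S \<subseteq> V" using S unfolding two_dominating_def by blast
  show "S \<noteq> {}"
  proof
    assume "S = {}"
    moreover obtain u where "u \<in> V" using G unfolding graph_def by blast
    ultimately show False using two[of u] by simp
  qed
  fix u assume u: "u \<in> V - S"
  obtain c\<^sub>1 c\<^sub>2 where c: "c\<^sub>1 \<in> cnbhd V E u \<inter> S" "c\<^sub>2 \<in> cnbhd V E u \<inter> S" "c\<^sub>1 \<noteq> c\<^sub>2"
  proof -
    have "finite (cnbhd V E u \<inter> S)" "\<not> card (cnbhd V E u \<inter> S) \<le> Suc 0"
      using finite_cnbhd G two[OF u] unfolding graph_def by auto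
    then show ?thesis using that card_le_Suc0_iff_eq by blast
  qed
  have adj: "E u c" if "c \<in> cnbhd V E u \<inter> S" for c
    using that u unfolding cnbhd_def nbhd_def by auto
  have u_in: "u \<in> cnbhd V E c" if "c \<in> cnbhd V E u \<inter> S" for c
    using adj[OF that] G unfolding graph_def cnbhd_def nbhd_def by auto
  show "cnbhd V E u \<inter> S \<noteq> {}" using c by blast
  have "(\<Inter>c \<in> cnbhd V E u \<inter> S. cnbhd V E c) \<subseteq> cnbhd V E c\<^sub>1 \<inter> cnbhd V E c\<^sub>2"
    using c by blast
  also have "\<dots> = {u}"
    using cnbhd_inter_eq_if_girth_ge_5[OF G girth adj adj] c by blast
  finally show "(\<Inter>c \<in> cnbhd V E u \<inter> S. cnbhd V E c) = {u}"
    using u_in by blast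
qed

theorem mainTheorem10:
  fixes V :: "'a set" and E :: "'a \<Rightarrow> 'a \<Rightarrow> bool"
  assumes "graph V E"
  shows "(\<forall>C. self_locating_dominating V E C \<longrightarrow> two_dominating V E C)
    \<and> (girth V E \<ge> 5 \<longrightarrow> (\<forall>S. two_dominating V E S \<longrightarrow> self_locating_dominating V E S))"
proof (intro conjI allI impI)
  show "two_dominating V E C" if "self_locating_dominating V E C" for C
    using self_locating_dominating_imp_two_dominating assms that unfolding graph_def by blast
  show "self_locating_dominating V E S" if "girth V E \<ge> 5" "two_dominating V E S" for S
    using two_dominating_imp_self_locating_dominating assms that by blast
qed

end
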